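(* Let $\kappa=[2\ell-1]$ for some $\ell\in\mathbb Z$, let $t=F+\check E+\kappa K^{-1}\in\mathbf U$, and define for $a\ge0$ $$\dot t^{(2a)}=\frac{t}{[2a]!}\prod_{j=-a+1}^{a-1}\bigl(t-[2j]\bigr),\qquad \dot t^{(2a+1)}=\frac{1}{[2a+1]!}\prod_{j=-a}^{a}\bigl(t-[2j]\bigr).$$ Then for every $m\ge1$, in $\mathbf U$, $$\dot t^{(2m)}=\sum_{b=0}^{2m}\sum_{a=0}^{b}\sum_{c\ge0} q^{\binom{2c}{2}-2c-b(2m-b-2c)-a(b-a)}\,\mathfrak p^{(2m-b-2c)}(\kappa)\;\check E^{(a)}\Bigl\{\begin{matrix}h;2-m\\ c\end{matrix}\Bigr\}K^{b-2m+2c}F^{(b-a)},$$ $$\dot t^{(2m-1)}=\sum_{b=0}^{2m-1}\sum_{a=0}^{b}\sum_{c\ge0} q^{\binom{2c}{2}-b(2m-b-2c-1)-a(b-a)}\,\mathfrak p^{(2m-b-2c-1)}(\kappa)\;\check E^{(a)}\Bigl\{\begin{matrix}h;2-m\\ c\end{matrix}\Bigr\}K^{b-2m+2c+1}F^{(b-a)}.$$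
   Context: $q$ is an indeterminate, $[n]=\frac{q^n-q^{-n}}{q-q^{-1}}$ for $n\in\mathbb Z$, $[n]!=[1]\cdots[n]$, $[0]!=1$. $\mathbf U$ is the $\mathbb Q(q)$-algebra generated by $E,F,K^{\pm1}$ with relations $KK^{-1}=K^{-1}K=1$, $EF-FE=\frac{K-K^{-1}}{q-q^{-1}}$, $KE=q^2EK$, $KF=q^{-2}FK$. Put $\check E=q^{-1}EK^{-1}$, $\check E^{(n)}=\check E^n/[n]!$, $F^{(n)}=F^n/[n]!$. For $a\in\mathbb Z$, $n\in\mathbb N$: $\Bigl\{\begin{matrix}h;a\\ n\end{matrix}\Bigr\}=\prod_{i=1}^{n}\frac{q^{4a+4i-4}K^{-2}-q^2}{q^{4i}-1}$ (equal to $1$ for $n=0$). The polynomials $\mathfrak p_n(x)$ are defined by $\mathfrak p_0=1$, $\mathfrak p_n=0$ for $n<0$, $\mathfrak p_{n+1}=x\,\mathfrak p_n+q^{2-2n}[n][n-2]\,\mathfrak p_{n-1}$ ($n\ge0$); $\mathfrak p^{(n)}=\mathfrak p_n/[n]!$ for $n\ge0$ and $\mathfrak p^{(n)}=0$ for $n<0$. *)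

theory Defs
  imports Complex_Main "HOL-Computational_Algebra.Polynomial" "HOL-Computational_Algebra.Fraction_Field"
begin

type_synonym Qq = "rat poly fract"

definition qv :: Qq where "qv = Fract [:0, 1:] 1"

definition qint :: "int \<Rightarrow> Qq" where
  "qint n = (qv powi n - qv powi (- n)) / (qv - qv powi (-1))"

definition qfact :: "nat \<Rightarrow> Qq" where
  "qfact n = (\<Prod>i\<in>{1..n}. qint (int i))"

fun frakp :: "nat \<Rightarrow> Qq \<Rightarrow> Qq" where
  "frakp 0 x = 1"
| "frakp (Suc 0) x = x"
| "frakp (Suc (Suc n)) x =
     x * frakp (Suc n) x + qv powi (2 - 2 * (int n + 1)) * qint (int n + 1) * qint (int n - 1) * frakp n x"

definition frakp_div :: "int \<Rightarrow> Qq \<Rightarrow> Qq" where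
  "frakp_div n x = (if n < 0 then 0 else frakp (nat n) x / qfact (nat n))"

text \<open>A Q(q)-algebra A (ring_1 type) with structure map phi : Q(q) -> A (a unital ring
  homomorphism with central image), containing elements E, F, K, Kinv satisfying the
  defining relations of U.  Since U is the universal such algebra, an identity in the
  generators holds in U iff it holds in every such algebra.\<close>
definition U_rep :: "(Qq \<Rightarrow> 'a::ring_1) \<Rightarrow> 'a \<Rightarrow> 'a \<Rightarrow> 'a \<Rightarrow> 'a \<Rightarrow> bool" where
  "U_rep \<phi> E F K Kinv \<longleftrightarrow>
     \<phi> 1 = 1 \<and> (\<forall>x y. \<phi> (x + y) = \<phi> x + \<phi> y) \<and> (\<forall>x y. \<phi> (x * y) = \<phi> x * \<phi> y) \<and>
     (\<forall>x y. \<phi> x * y = y * \<phi> x) \<and>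
     K * Kinv = 1 \<and> Kinv * K = 1 \<and>
     E * F - F * E = \<phi> (1 / (qv - qv powi (-1))) * (K - Kinv) \<and>
     K * E = \<phi> (qv ^ 2) * E * K \<and>
     K * F = \<phi> (qv powi (-2)) * F * K"

definition Kpow :: "'a::ring_1 \<Rightarrow> 'a \<Rightarrow> int \<Rightarrow> 'a" where
  "Kpow K Kinv e = (if 0 \<le> e then K ^ nat e else Kinv ^ nat (- e))"

definition dpow :: "(Qq \<Rightarrow> 'a::ring_1) \<Rightarrow> 'a \<Rightarrow> nat \<Rightarrow> 'a" where
  "dpow \<phi> X n = \<phi> (1 / qfact n) * X ^ n"

definition Echk :: "(Qq \<Rightarrow> 'a::ring_1) \<Rightarrow> 'a \<Rightarrow> 'a \<Rightarrow> 'a" where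
  "Echk \<phi> E Kinv = \<phi> (qv powi (-1)) * E * Kinv"

fun hbr :: "(Qq \<Rightarrow> 'a::ring_1) \<Rightarrow> 'a \<Rightarrow> int \<Rightarrow> nat \<Rightarrow> 'a" where
  "hbr \<phi> Kinv a 0 = 1"
| "hbr \<phi> Kinv a (Suc n) = hbr \<phi> Kinv a n *
     ((\<phi> (qv powi (4 * a + 4 * int (Suc n) - 4)) * Kinv ^ 2 - \<phi> (qv ^ 2))
       * \<phi> (1 / (qv ^ (4 * Suc n) - 1)))"

definition tprod :: "(Qq \<Rightarrow> 'a::ring_1) \<Rightarrow> 'a \<Rightarrow> int \<Rightarrow> int \<Rightarrow> 'a" where
  "tprod \<phi> t lo hi = foldr (\<lambda>j acc. (t - \<phi> (qint (2 * j))) * acc) [lo..hi] 1"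

definition tdot :: "(Qq \<Rightarrow> 'a::ring_1) \<Rightarrow> 'a \<Rightarrow> nat \<Rightarrow> 'a" where
  "tdot \<phi> t n = (if even n
      then \<phi> (1 / qfact n) * t * tprod \<phi> t (- int (n div 2) + 1) (int (n div 2) - 1)
      else \<phi> (1 / qfact n) * tprod \<phi> t (- int (n div 2)) (int (n div 2)))"

end

theory Submission
  imports Defs "HOL-Library.Groups_Big_Fun" "HOL-Library.Product_Plus"
begin

text \<open>Both divided powers of \<open>t\<close> are expanded in the monomials
  \<open>Ec^a {h;\<alpha> over c} K^(a+r-N+2c) F^r\<close> with undivided powers, indexed by \<open>(a, c, r) \<in> \<int>\<^sup>3\<close>.
  Because \<open>[2m] t^(2m) = t^(2m-1) t\<close> and \<open>[2m+1] t^(2m+1) = t^(2m) t - [2m] t^(2m-1)\<close>, the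
  expansions follow by induction once right multiplication of a monomial by \<open>t\<close> is understood:
  \<open>F\<close> and \<open>K^-1\<close> act directly, whereas moving \<open>Ec\<close> to the front past \<open>F^r\<close>, \<open>K^s\<close> and
  \<open>{h;\<alpha> over c}\<close> (which turns \<open>\<alpha>\<close> into \<open>\<alpha> - 1\<close>) and re-expanding with the \<open>q\<close>-Pascal rule
  of \<open>{h}\<close> produces seven terms. The recurrence and the \<open>q\<close>-Pascal rule of \<open>{h}\<close> also
  re-express \<open>t^(2m-1)\<close> at degree \<open>2m+1\<close> and pass from \<open>\<alpha> = 2 - m\<close> to \<open>\<alpha> = 1 - m\<close>. Comparing coefficients, each induction step becomes
  an identity in \<open>\<rat>(q)\<close> which, after removing a common factor, is the three-term recurrence
  of the polynomials \<open>p\<^sub>n\<close>.\<close>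

section \<open>Arithmetic in \<open>\<rat>(q)\<close>\<close>

lemma qv_power: "qv ^ n = Fract (monom 1 n) 1"
proof (induction n)
  case 0
  then show ?case by (simp add: One_fract_def)
next
  case (Suc n)
  have "[:0, 1:] * monom (1::rat) n = monom 1 (Suc n)"
    by (simp add: monom_Suc)
  with Suc show ?case by (simp add: qv_def mult_fract)
qed

lemma qv_nonzero [simp]: "qv \<noteq> 0"
  by (simp add: qv_def Zero_fract_def eq_fract)

lemma qv_power_eq_1_iff: "qv ^ n = 1 \<longleftrightarrow> n = 0"
proof
  assume "qv ^ n = 1"
  then have "monom (1::rat) n = 1"
    by (simp add: qv_power One_fract_def eq_fract)
  then have "degree (monom (1::rat) n) = 0" by simp
  then show "n = 0" by (simp add: degree_monom_eq)
qed simp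

lemma qv_powi_eq_1_iff: "qv powi k = 1 \<longleftrightarrow> k = 0"
proof
  assume k: "qv powi k = 1"
  show "k = 0"
  proof (cases "k \<ge> 0")
    case True
    with k have "qv ^ nat k = 1" by (simp add: power_int_def)
    with True show ?thesis by (simp add: qv_power_eq_1_iff)
  next
    case False
    with k have "qv ^ nat (- k) = 1" by (simp add: power_int_def field_simps)
    with False show ?thesis by (simp add: qv_power_eq_1_iff)
  qed
qed simp

lemma qv_square_minus_1_nonzero: "qv ^ 2 - 1 \<noteq> 0"
  using qv_power_eq_1_iff[of 2] by simp

lemma qv_minus_inverse: "qv - qv powi -1 = (qv ^ 2 - 1) / qv"
  by (simp add: field_simps power2_eq_square power_int_minus)

lemma qv_minus_inverse_nonzero: "qv - qv powi -1 \<noteq> 0"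
  unfolding qv_minus_inverse using qv_square_minus_1_nonzero by simp

lemma qint_eq: "qint k = (qv powi k - qv powi (- k)) * qv / (qv ^ 2 - 1)"
  unfolding qint_def qv_minus_inverse by simp

lemma qint_0 [simp]: "qint 0 = 0"
  by (simp add: qint_def)

lemma qint_1 [simp]: "qint 1 = 1"
  using qv_minus_inverse_nonzero by (simp add: qint_def)

lemma qint_uminus: "qint (- k) = - qint k"
  unfolding qint_def by (simp add: diff_divide_distrib)

lemma qint_nonzero: "k \<noteq> 0 \<Longrightarrow> qint k \<noteq> 0"
proof
  assume k: "k \<noteq> 0" and "qint k = 0"
  then have "qv powi k = qv powi (- k)"
    using qv_square_minus_1_nonzero by (simp add: qint_eq)
  then have "qv powi k * qv powi k = 1"
    by (metis power_int_minus qv_nonzero power_int_eq_0_iff right_inverse)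
  moreover have "qv powi (k + k) = qv powi k * qv powi k"
    using power_int_add[of qv k k] by simp
  ultimately have "qv powi (k + k) = 1" by simp
  with k show False by (simp add: qv_powi_eq_1_iff)
qed

lemma qfact_0 [simp]: "qfact 0 = 1"
  by (simp add: qfact_def)

lemma qfact_Suc: "qfact (Suc n) = qfact n * qint (int n + 1)"
  by (simp add: qfact_def prod.cl_ivl_Suc add.commute)

lemma qfact_nonzero: "qfact n \<noteq> 0"
  by (induction n) (auto simp: qfact_Suc qint_nonzero)

text \<open>The reciprocal factorial \<open>1/[a]!\<close>, extended by zero to negative \<open>a\<close>; with this
  convention \<open>1/[a-1]! = [a]/[a]!\<close> holds for every integer \<open>a\<close>.\<close>
definition inv_qfact :: "int \<Rightarrow> Qq" where
  "inv_qfact a = (if a < 0 then 0 else 1 / qfact (nat a))"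

lemma inv_qfact_pred: "inv_qfact (a - 1) = qint a * inv_qfact a"
proof (cases "a \<ge> 1")
  case True
  then have "nat a = Suc (nat (a - 1))" "int (nat (a - 1)) + 1 = a" by simp_all
  with True show ?thesis
    by (simp add: inv_qfact_def qfact_Suc qfact_nonzero qint_nonzero)
next
  case False
  then show ?thesis by (cases "a = 0") (auto simp: inv_qfact_def)
qed

lemma frakp_div_recurrence:
  "qint (j + 1) * frakp_div (j + 1) x
     = x * frakp_div j x + qv powi (2 - 2 * j) * qint (j - 2) * frakp_div (j - 1) x"
proof (cases "j \<ge> 1")
  case True
  define n where "n = nat (j - 1)"
  have j: "j = int n + 1" "nat (j + 1) = Suc (Suc n)" "nat j = Suc n" "nat (j - 1) = n"
    using True by (auto simp: n_def)
  have qfact: "qfact (Suc n) = qfact n * qint j" "qfact (Suc (Suc n)) = qfact n * qint j * qint (j + 1)"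
    by (simp_all add: qfact_Suc j(1) add.commute)
  have nonzero: "qfact n \<noteq> 0" "qint j \<noteq> 0" "qint (j + 1) \<noteq> 0"
    using qfact_nonzero qint_nonzero True by auto
  have frakp: "frakp (Suc (Suc n)) x
      = x * frakp (Suc n) x + qv powi (2 - 2 * j) * qint j * qint (j - 2) * frakp n x"
    by (simp add: j(1))
  have divided: "frakp_div (j + 1) x = frakp (Suc (Suc n)) x / qfact (Suc (Suc n))"
    "frakp_div j x = frakp (Suc n) x / qfact (Suc n)" "frakp_div (j - 1) x = frakp n x / qfact n"
    using True by (simp_all add: frakp_div_def j(2-4))
  show ?thesis
    unfolding divided frakp qfact using nonzero by (simp add: field_simps)
next
  case False
  then consider "j = 0" | "j = -1" | "j \<le> -2" by linarith
  then show ?thesis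
    by cases (auto simp: frakp_div_def qfact_def)
qed

lemma qv_powi_numeral_mult: "qv powi (numeral k * x) = (qv powi x) ^ numeral k"
  by (simp add: power_int_mult mult.commute[of "numeral k"] power_int_power'[symmetric])

lemma qv_powi_neg_numeral_mult: "qv powi (- numeral k * x) = inverse ((qv powi x) ^ numeral k)"
  by (metis mult_minus_left power_int_minus qv_powi_numeral_mult)

lemmas qv_powi_split =
  power_int_add power_int_diff power_int_minus qv_powi_numeral_mult qv_powi_neg_numeral_mult

text \<open>The coefficients in \<open>F^r Ec = q^(-2r) Ec F^r + \<gamma> r F^(r-1) + \<delta> r K^(-2) F^(r-1)\<close>.\<close>
definition \<gamma> :: "int \<Rightarrow> Qq" where
  "\<gamma> r = - (qv powi (- r)) * qint r / (qv - qv powi -1)"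

definition \<delta> :: "int \<Rightarrow> Qq" where
  "\<delta> r = qv powi (2 - 3 * r) * qint r / (qv - qv powi -1)"

lemma \<gamma>_0 [simp]: "\<gamma> 0 = 0"
  by (simp add: \<gamma>_def)

lemma \<delta>_0 [simp]: "\<delta> 0 = 0"
  by (simp add: \<delta>_def)

lemma \<gamma>_plus_1: "\<gamma> (r + 1) = \<gamma> r - qv powi (- 2 * r) * qv powi -1 / (qv - qv powi -1)"
proof -
  define R where "R = qv powi r"
  define W where "W = qv ^ 2 - 1"
  have nonzero: "R \<noteq> 0" "W \<noteq> 0"
    using qv_square_minus_1_nonzero by (simp_all add: R_def W_def)
  show ?thesis
    unfolding \<gamma>_def qint_eq qv_minus_inverse W_def[symmetric]
    by (simp add: qv_powi_split R_def[symmetric]) (simp add: field_simps nonzero, unfold W_def, algebra)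
qed

lemma \<delta>_plus_1: "\<delta> (r + 1) = \<delta> r * qv powi -4 + qv powi (- 2 * r) * qv powi -1 / (qv - qv powi -1)"
proof -
  define R where "R = qv powi r"
  define W where "W = qv ^ 2 - 1"
  have nonzero: "R \<noteq> 0" "W \<noteq> 0"
    using qv_square_minus_1_nonzero by (simp_all add: R_def W_def)
  show ?thesis
    unfolding \<delta>_def qint_eq qv_minus_inverse W_def[symmetric]
    by (simp add: qv_powi_split R_def[symmetric]) (simp add: field_simps nonzero, unfold W_def, algebra)
qed

lemma qv_power_4_Suc_minus_1_nonzero: "qv ^ (4 * Suc n) - 1 \<noteq> 0"
  using qv_power_eq_1_iff[of "4 * Suc n"] by simp

fun hbr_den :: "nat \<Rightarrow> Qq" where
  "hbr_den 0 = 1"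
| "hbr_den (Suc n) = hbr_den n * (qv ^ (4 * Suc n) - 1)"

lemma hbr_den_nonzero: "hbr_den n \<noteq> 0"
  by (induction n) (simp_all add: qv_power_eq_1_iff)

section \<open>Algebras over \<open>\<rat>(q)\<close>\<close>

locale Qq_algebra =
  fixes \<phi> :: "Qq \<Rightarrow> 'a::ring_1"
  assumes phi_1: "\<phi> 1 = 1"
    and phi_add: "\<phi> (x + y) = \<phi> x + \<phi> y"
    and phi_mult: "\<phi> (x * y) = \<phi> x * \<phi> y"
    and phi_central: "\<phi> x * z = z * \<phi> x"
begin

lemma phi_0: "\<phi> 0 = 0"
  using phi_add[of 0 0] by simp

lemma phi_uminus: "\<phi> (- x) = - \<phi> x"
  using phi_add[of "- x" x] phi_0 by (simp add: eq_neg_iff_add_eq_0)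

lemma phi_diff: "\<phi> (x - y) = \<phi> x - \<phi> y"
  using phi_add[of x "- y"] phi_uminus[of y] by simp

definition smul :: "Qq \<Rightarrow> 'a \<Rightarrow> 'a" where
  "smul c x = \<phi> c * x"

lemma phi_eq_smul: "\<phi> c = smul c 1"
  by (simp add: smul_def)

lemma smul_mult_left [simp]: "smul c x * y = smul c (x * y)"
  by (simp add: smul_def mult.assoc)

lemma smul_mult_right [simp]: "x * smul c y = smul c (x * y)"
  unfolding smul_def by (metis mult.assoc phi_central)

lemma smul_smul [simp]: "smul c (smul d x) = smul (c * d) x"
  by (simp add: smul_def phi_mult mult.assoc)

lemma smul_one [simp]: "smul 1 x = x"
  by (simp add: smul_def phi_1)

lemma smul_zero_left [simp]: "smul 0 x = 0"
  by (simp add: smul_def phi_0)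

lemma smul_zero_right [simp]: "smul c 0 = 0"
  by (simp add: smul_def)

lemma smul_add_right: "smul c (x + y) = smul c x + smul c y"
  by (simp add: smul_def distrib_left)

lemma smul_diff_right: "smul c (x - y) = smul c x - smul c y"
  by (simp add: smul_def right_diff_distrib)

lemma smul_minus_right: "smul c (- x) = - smul c x"
  by (simp add: smul_def)

lemma smul_add_left: "smul (c + d) x = smul c x + smul d x"
  by (simp add: smul_def phi_add distrib_right)

lemma smul_diff_left: "smul (c - d) x = smul c x - smul d x"
  by (simp add: smul_def phi_diff left_diff_distrib)

lemma smul_minus_left: "smul (- c) x = - smul c x"
  by (simp add: smul_def phi_uminus)

lemmas smul_distribs =
  smul_add_right smul_diff_right smul_minus_right smul_add_left smul_diff_left smul_minus_left

lemma smul_left_inject: "c \<noteq> 0 \<Longrightarrow> smul c x = smul c y \<longleftrightarrow> x = y"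
  by (metis smul_one smul_smul field_class.field_inverse mult.commute)

definition lincomb :: "('i \<Rightarrow> 'a) \<Rightarrow> ('i \<Rightarrow> Qq) \<Rightarrow> 'a" where
  "lincomb B D = Sum_any (\<lambda>x. smul (D x) (B x))"

lemma lincomb_eq_sum:
  "finite S \<Longrightarrow> {x. D x \<noteq> 0} \<subseteq> S \<Longrightarrow> lincomb B D = (\<Sum>x\<in>S. smul (D x) (B x))"
  unfolding lincomb_def by (rule Sum_any.expand_superset) auto

lemma lincomb_cong:
  "(\<And>x. D x \<noteq> 0 \<Longrightarrow> B1 x = B2 x) \<Longrightarrow> lincomb B1 D = lincomb B2 D"
  unfolding lincomb_def by (rule Sum_any.cong) (metis smul_zero_left)

lemma lincomb_mult_right:
  "finite {x. D x \<noteq> 0} \<Longrightarrow> lincomb B D * z = lincomb (\<lambda>x. B x * z) D"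
  by (simp add: lincomb_eq_sum[OF _ order_refl] sum_distrib_right)

lemma lincomb_smul:
  "finite {x. D x \<noteq> 0} \<Longrightarrow> smul c (lincomb B D) = lincomb B (\<lambda>x. c * D x)"
  by (subst (1 2) lincomb_eq_sum[of "{x. D x \<noteq> 0}"])
    (auto simp: smul_def sum_distrib_left mult.assoc phi_mult)

lemma lincomb_add:
  assumes "finite {x. D1 x \<noteq> 0}" "finite {x. D2 x \<noteq> 0}"
  shows "lincomb B D1 + lincomb B D2 = lincomb B (\<lambda>x. D1 x + D2 x)"
  using assms
  by (subst (1 2 3) lincomb_eq_sum[of "{x. D1 x \<noteq> 0} \<union> {x. D2 x \<noteq> 0}"])
    (auto simp: sum.distrib smul_add_left)

lemma lincomb_diff:
  assumes "finite {x. D1 x \<noteq> 0}" "finite {x. D2 x \<noteq> 0}"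
  shows "lincomb B D1 - lincomb B D2 = lincomb B (\<lambda>x. D1 x - D2 x)"
  using assms
  by (subst (1 2 3) lincomb_eq_sum[of "{x. D1 x \<noteq> 0} \<union> {x. D2 x \<noteq> 0}"])
    (auto simp: sum_subtractf smul_diff_left)

lemma lincomb_shift:
  "lincomb (\<lambda>x. B (x + d)) D = lincomb B (\<lambda>y. D (y - d :: 'i::group_add))"
  unfolding lincomb_def
  by (rule Sum_any.reindex_cong[where l = "\<lambda>y. y - d"]) (auto simp: bij_def inj_def surj_def)

end

text \<open>A list \<open>L\<close> of pairs \<open>(f, d)\<close> describes the basis change
  \<open>B x = (\<Sum>(f, d)\<leftarrow>L. f x \<cdot> B' (x + d))\<close>; \<open>rewrite_coeffs L\<close> is the
  corresponding map on coefficient functions.\<close>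
definition rewrite_coeffs ::
  "(('i::group_add \<Rightarrow> Qq) \<times> 'i) list \<Rightarrow> ('i \<Rightarrow> Qq) \<Rightarrow> 'i \<Rightarrow> Qq" where
  "rewrite_coeffs L D y = (\<Sum>(f, d)\<leftarrow>L. f (y - d) * D (y - d))"

lemma rewrite_coeffs_Nil [simp]: "rewrite_coeffs [] D = (\<lambda>y. 0)"
  by (simp add: rewrite_coeffs_def fun_eq_iff)

lemma rewrite_coeffs_Cons:
  "rewrite_coeffs ((f, d) # L) D = (\<lambda>y. f (y - d) * D (y - d) + rewrite_coeffs L D y)"
  by (simp add: rewrite_coeffs_def fun_eq_iff)

lemma finite_support_rewrite_coeffs:
  assumes "finite {x. D x \<noteq> 0}"
  shows "finite {y. rewrite_coeffs L D y \<noteq> 0}"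
proof (induction L)
  case Nil
  then show ?case by (simp add: rewrite_coeffs_def)
next
  case (Cons fd L)
  obtain f d where fd: "fd = (f, d)" by fastforce
  have "{y. rewrite_coeffs (fd # L) D y \<noteq> 0}
      \<subseteq> (\<lambda>x. x + d) ` {x. D x \<noteq> 0} \<union> {y. rewrite_coeffs L D y \<noteq> 0}"
    by (auto simp: fd rewrite_coeffs_Cons image_iff) (metis diff_add_cancel)
  moreover have "finite ((\<lambda>x. x + d) ` {x. D x \<noteq> 0} \<union> {y. rewrite_coeffs L D y \<noteq> 0})"
    using Cons.IH assms by simp
  ultimately show ?case
    by (rule finite_subset)
qed

context Qq_algebra
begin

lemma lincomb_rewrite_coeffs:
  assumes finite: "finite {x. D x \<noteq> 0}"
    and "\<And>x. D x \<noteq> 0 \<Longrightarrow> B x = (\<Sum>(f, d)\<leftarrow>L. smul (f x) (B' (x + d)))"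
  shows "lincomb B D = lincomb B' (rewrite_coeffs L D)"
proof -
  have "lincomb (\<lambda>x. \<Sum>(f, d)\<leftarrow>L. smul (f x) (B' (x + d))) D = lincomb B' (rewrite_coeffs L D)"
  proof (induction L)
    case Nil
    then show ?case by (simp add: lincomb_def rewrite_coeffs_def)
  next
    case (Cons fd L)
    obtain f d where fd: "fd = (f, d)" by fastforce
    have "lincomb (\<lambda>x. \<Sum>(f, d)\<leftarrow>fd # L. smul (f x) (B' (x + d))) D
        = lincomb (\<lambda>x. B' (x + d)) (\<lambda>x. D x * f x)
          + lincomb (\<lambda>x. \<Sum>(f, d)\<leftarrow>L. smul (f x) (B' (x + d))) D"
      unfolding lincomb_def fd
      by (subst Sum_any.distrib[symmetric]; (rule finite_subset[OF _ finite])?)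
        (auto simp: smul_add_right)
    also have "\<dots> = lincomb B' (\<lambda>y. f (y - d) * D (y - d)) + lincomb B' (rewrite_coeffs L D)"
      by (simp add: lincomb_shift Cons.IH mult.commute)
    also have "\<dots> = lincomb B' (rewrite_coeffs (fd # L) D)"
      using finite_support_rewrite_coeffs[OF finite, of "[(f, d)]"]
        finite_support_rewrite_coeffs[OF finite, of L]
      by (simp add: lincomb_add rewrite_coeffs_Cons fd)
    finally show ?case .
  qed
  then show ?thesis
    using assms(2) lincomb_cong[of D B] by simp
qed

lemma tprod_commute: "t * tprod \<phi> t lo hi = tprod \<phi> t lo hi * t"
proof -
  have "t * foldr (\<lambda>j acc. (t - \<phi> (qint (2 * j))) * acc) js 1
      = foldr (\<lambda>j acc. (t - \<phi> (qint (2 * j))) * acc) js 1 * t" for js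
  proof (induction js)
    case (Cons j js)
    have "t * (t - \<phi> (qint (2 * j))) = (t - \<phi> (qint (2 * j))) * t"
      by (simp add: left_diff_distrib right_diff_distrib phi_central)
    with Cons show ?case
      by (simp add: mult.assoc[symmetric]) (simp add: mult.assoc)
  qed simp
  then show ?thesis by (simp add: tprod_def)
qed

lemma tprod_extend:
  assumes "lo \<le> hi"
  shows "tprod \<phi> t (lo - 1) (hi + 1)
    = (t - \<phi> (qint (2 * (lo - 1)))) * tprod \<phi> t lo hi * (t - \<phi> (qint (2 * (hi + 1))))"
proof -
  have foldr_factor: "foldr (\<lambda>j acc. (t - \<phi> (qint (2 * j))) * acc) js z
      = foldr (\<lambda>j acc. (t - \<phi> (qint (2 * j))) * acc) js 1 * z" for js z
    by (induction js) (simp_all add: mult.assoc)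
  have "[lo - 1..hi + 1] = (lo - 1) # [lo..hi] @ [hi + 1]"
    using assms upto_rec1[of "lo - 1" "hi + 1"] upto_rec2[of lo "hi + 1"] by simp
  then have "tprod \<phi> t (lo - 1) (hi + 1) = (t - \<phi> (qint (2 * (lo - 1))))
      * foldr (\<lambda>j acc. (t - \<phi> (qint (2 * j))) * acc) [lo..hi] ((t - \<phi> (qint (2 * (hi + 1)))) * 1)"
    unfolding tprod_def by simp
  then show ?thesis
    unfolding foldr_factor[of _ "(t - \<phi> (qint (2 * (hi + 1)))) * 1"] tprod_def by (simp add: mult.assoc)
qed

lemma tdot_1: "tdot \<phi> t 1 = t"
  by (simp add: tdot_def tprod_def qfact_def phi_1 phi_0)

lemma tdot_double:
  "tdot \<phi> t (2 * m) = smul (1 / qfact (2 * m)) (t * tprod \<phi> t (1 - int m) (int m - 1))"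
  by (simp add: tdot_def smul_def mult.assoc)

lemma tdot_double_Suc:
  "tdot \<phi> t (2 * m + 1) = smul (1 / qfact (2 * m + 1)) (tprod \<phi> t (- int m) (int m))"
  by (simp add: tdot_def smul_def)

lemma tdot_double_minus_1:
  assumes "1 \<le> m"
  shows "tdot \<phi> t (2 * m - 1) = smul (1 / qfact (2 * m - 1)) (tprod \<phi> t (1 - int m) (int m - 1))"
proof -
  have "2 * m - 1 = 2 * (m - 1) + 1" "- int (m - 1) = 1 - int m" "int (m - 1) = int m - 1"
    using assms by auto
  then show ?thesis by (simp only: tdot_double_Suc)
qed

lemma qfact_double: "1 \<le> m \<Longrightarrow> qfact (2 * m) = qfact (2 * m - 1) * qint (2 * int m)"
  using qfact_Suc[of "2 * m - 1"] by (simp add: Suc_diff_1 of_nat_diff)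

lemma tdot_even_step:
  assumes "1 \<le> m"
  shows "smul (qint (2 * int m)) (tdot \<phi> t (2 * m)) = tdot \<phi> t (2 * m - 1) * t"
  unfolding tdot_double tdot_double_minus_1[OF assms] qfact_double[OF assms]
  using assms qfact_nonzero[of "2 * m - 1"] qint_nonzero[of "2 * int m"]
  by (simp add: tprod_commute)

lemma tdot_odd_step:
  assumes "1 \<le> m"
  shows "smul (qint (2 * int m + 1)) (tdot \<phi> t (2 * m + 1))
    = tdot \<phi> t (2 * m) * t - smul (qint (2 * int m)) (tdot \<phi> t (2 * m - 1))"
proof -
  define P where "P = tprod \<phi> t (1 - int m) (int m - 1)"
  define c where "c = qint (2 * int m)"
  have "tprod \<phi> t (- int m) (int m) = (t + smul c 1) * P * (t - smul c 1)"
    using assms tprod_extend[of "1 - int m" "int m - 1" t]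
    by (simp add: P_def c_def qint_uminus smul_def phi_uminus)
  also have "\<dots> = P * (t * t) - smul (c * c) P"
    using tprod_commute[of t "1 - int m" "int m - 1"]
    by (simp add: P_def algebra_simps smul_distribs)
  finally have "tprod \<phi> t (- int m) (int m) = P * (t * t) - smul (c * c) P" .
  moreover have "qfact (2 * m + 1) = qfact (2 * m - 1) * c * qint (2 * int m + 1)"
    using qfact_Suc[of "2 * m"] qfact_double[OF assms] by (simp add: c_def)
  ultimately show ?thesis
    unfolding tdot_double tdot_double_Suc tdot_double_minus_1[OF assms] qfact_double[OF assms]
    using assms qfact_nonzero[of "2 * m - 1"] qint_nonzero[of "2 * int m"]
      qint_nonzero[of "2 * int m + 1"] tprod_commute[of t "1 - int m" "int m - 1"]
    by (simp add: P_def c_def smul_distribs mult.assoc[symmetric])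
qed

end

section \<open>The coefficient recursion\<close>

type_synonym coeff_rule = "((int \<times> int \<times> int \<Rightarrow> Qq) \<times> (int \<times> int \<times> int)) list"

text \<open>Expansion rules in the format of \<open>rewrite_coeffs\<close>: right multiplication by \<open>t\<close>
  (lemma \<open>pbw_times_t\<close>), raising the degree by two (\<open>pbw_level_rule\<close>) and lowering \<open>\<alpha>\<close>
  (\<open>pbw_alpha_rule\<close>).\<close>
definition t_rule :: "int \<Rightarrow> int \<Rightarrow> Qq \<Rightarrow> coeff_rule" where
  "t_rule \<alpha> N k = [
     (\<lambda>_. 1, (0, 0, 1)),
     (\<lambda>(a, c, r). k * qv powi (- 2 * r), 0),
     (\<lambda>(a, c, r). qv powi (2 * (a + r - N + 2 * c) - 2 * r), (1, 0, 0)),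
     (\<lambda>(a, c, r). if c = 0 then 0
        else - (qv powi (4 * \<alpha> - 4) * qv powi (2 * (a + r - N + 2 * c) - 2 * r)), (1, - 1, 0)),
     (\<lambda>(a, c, r). \<gamma> r * qv powi (4 * \<alpha> + 4 * c - 2), (0, 0, - 1)),
     (\<lambda>(a, c, r). - (\<gamma> r * (qv powi -2 * (qv powi (4 * c + 4) - 1))), (0, 1, - 1)),
     (\<lambda>(a, c, r). \<delta> r, (0, 0, - 1))]"

definition level_rule :: "int \<Rightarrow> coeff_rule" where
  "level_rule \<alpha> = [
     (\<lambda>(a, c, r). qv powi (4 * \<alpha> + 4 * c - 2), 0),
     (\<lambda>(a, c, r). - (qv powi -2 * (qv powi (4 * c + 4) - 1)), (0, 1, 0))]"

definition alpha_rule :: "int \<Rightarrow> coeff_rule" where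
  "alpha_rule \<alpha> = [
     (\<lambda>_. 1, 0),
     (\<lambda>(a, c, r). if c = 0 then 0 else - (qv powi (4 * \<alpha> - 4)), (0, - 1, 0))]"

definition tcoeff_exp :: "int \<Rightarrow> int \<Rightarrow> int \<Rightarrow> int \<Rightarrow> int" where
  "tcoeff_exp n a c r
     = c * (2 * c - 1) - (if even n then 2 * c else 0) - (a + r) * (n - a - r - 2 * c) - a * r"

definition tcoeff_term :: "Qq \<Rightarrow> int \<Rightarrow> int \<Rightarrow> int \<Rightarrow> int \<Rightarrow> Qq" where
  "tcoeff_term k n a c r = qv powi tcoeff_exp n a c r * frakp_div (n - a - r - 2 * c) k * inv_qfact a * inv_qfact r"

text \<open>The coefficient of \<open>pbw \<alpha> n (a, c, r)\<close> in the expansion of the \<open>n\<close>-th divided power of \<open>t\<close>.\<close>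
definition tcoeff :: "Qq \<Rightarrow> int \<Rightarrow> int \<times> int \<times> int \<Rightarrow> Qq" where
  "tcoeff k n x = (case x of (a, c, r) \<Rightarrow> if c < 0 then 0 else tcoeff_term k n a c r)"

lemma tcoeff_nonzero_imp:
  "tcoeff k n (a, c, r) \<noteq> 0 \<Longrightarrow> 0 \<le> a \<and> 0 \<le> c \<and> 0 \<le> r \<and> a + r + 2 * c \<le> n"
  by (auto simp: tcoeff_def tcoeff_term_def inv_qfact_def frakp_div_def split: if_splits)

lemma tcoeff_support_nonneg: "tcoeff k n (a, c, r) \<noteq> 0 \<Longrightarrow> 0 \<le> a \<and> 0 \<le> c \<and> 0 \<le> r"
  using tcoeff_nonzero_imp by blast

lemma finite_support_tcoeff: "finite {x. tcoeff k n x \<noteq> 0}"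
proof (rule finite_subset)
  show "{x. tcoeff k n x \<noteq> 0} \<subseteq> {0..n} \<times> {0..n} \<times> {0..n}"
    using tcoeff_nonzero_imp by fastforce
qed simp

lemma tcoeff_term_shift:
  assumes "tcoeff_exp n' a' c' r' = tcoeff_exp n a c r + e" and "n' - a' - r' - 2 * c' = j"
  shows "tcoeff_term k n' a' c' r'
    = qv powi tcoeff_exp n a c r * qv powi e * frakp_div j k * inv_qfact a' * inv_qfact r'"
  using assms by (simp add: tcoeff_term_def power_int_add)

lemma inv_qfact_eq_Suc: "inv_qfact r = qint (r + 1) * inv_qfact (r + 1)"
  using inv_qfact_pred[of "r + 1"] by simp

text \<open>The coefficients entering one step of the recurrence, as multiples of a common factor \<open>Z\<close>;
  \<open>\<epsilon>\<close> records the parity of \<open>n\<close>, which enters through \<open>tcoeff_exp\<close>.\<close>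
lemma tcoeff_term_neighbours:
  fixes k :: Qq and n a c r :: int
  defines "J \<equiv> n - a - r - 2 * c" and "\<epsilon> \<equiv> (if even n then 1 else 0 :: int)"
    and "Z \<equiv> qv powi tcoeff_exp n a c r * inv_qfact a * inv_qfact (r + 1)"
  shows "tcoeff_term k n a c r = Z * (qint (r + 1) * frakp_div J k)"
    and "tcoeff_term k n a c (r - 1) = Z * (qv powi (J + 1 - r) * qint r * qint (r + 1) * frakp_div (J + 1) k)"
    and "tcoeff_term k n (a - 1) c r = Z * (qv powi (J + 1 - a) * qint a * qint (r + 1) * frakp_div (J + 1) k)"
    and "tcoeff_term k n (a - 1) (c + 1) r
      = Z * (qv powi (n + 2 * c + r - 2 * \<epsilon>) * qint a * qint (r + 1) * frakp_div (J - 1) k)"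
    and "tcoeff_term k n a c (r + 1) = Z * (qv powi (r + 1 - J) * frakp_div (J - 1) k)"
    and "tcoeff_term k n a (c - 1) (r + 1) = Z * (qv powi (2 + 2 * \<epsilon> - n - a - 2 * c) * frakp_div (J + 1) k)"
proof -
  have shift: "tcoeff_term k n' a' c' r' = qv powi tcoeff_exp n a c r * qv powi e * frakp_div j k * inv_qfact a' * inv_qfact r'"
    if "tcoeff_exp n' a' c' r' = tcoeff_exp n a c r + e" and "n' - a' - r' - 2 * c' = j" for n' a' c' r' e j
    using that by (rule tcoeff_term_shift)
  show "tcoeff_term k n a c r = Z * (qint (r + 1) * frakp_div J k)"
    by (simp add: tcoeff_term_def Z_def J_def inv_qfact_eq_Suc[of r] ac_simps)
  show "tcoeff_term k n a c (r - 1) = Z * (qv powi (J + 1 - r) * qint r * qint (r + 1) * frakp_div (J + 1) k)"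
    by (subst shift[where e = "J + 1 - r" and j = "J + 1"])
      (simp_all add: Z_def tcoeff_exp_def J_def inv_qfact_pred inv_qfact_eq_Suc[of r] algebra_simps)
  show "tcoeff_term k n (a - 1) c r = Z * (qv powi (J + 1 - a) * qint a * qint (r + 1) * frakp_div (J + 1) k)"
    by (subst shift[where e = "J + 1 - a" and j = "J + 1"])
      (simp_all add: Z_def tcoeff_exp_def J_def inv_qfact_pred inv_qfact_eq_Suc[of r] algebra_simps)
  show "tcoeff_term k n (a - 1) (c + 1) r
      = Z * (qv powi (n + 2 * c + r - 2 * \<epsilon>) * qint a * qint (r + 1) * frakp_div (J - 1) k)"
    by (subst shift[where e = "n + 2 * c + r - 2 * \<epsilon>" and j = "J - 1"])
      (simp_all add: Z_def tcoeff_exp_def J_def \<epsilon>_def inv_qfact_pred inv_qfact_eq_Suc[of r] algebra_simps)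
  show "tcoeff_term k n a c (r + 1) = Z * (qv powi (r + 1 - J) * frakp_div (J - 1) k)"
    by (subst shift[where e = "r + 1 - J" and j = "J - 1"])
      (simp_all add: Z_def tcoeff_exp_def J_def algebra_simps)
  show "tcoeff_term k n a (c - 1) (r + 1) = Z * (qv powi (2 + 2 * \<epsilon> - n - a - 2 * c) * frakp_div (J + 1) k)"
    by (subst shift[where e = "2 + 2 * \<epsilon> - n - a - 2 * c" and j = "J + 1"])
      (simp_all add: Z_def tcoeff_exp_def J_def \<epsilon>_def algebra_simps)
qed

lemma tcoeff_term_degree_neighbours:
  fixes k :: Qq and n a c r :: int
  defines "J \<equiv> n - a - r - 2 * c" and "\<epsilon> \<equiv> (if even n then 1 else 0 :: int)"
    and "Z \<equiv> qv powi tcoeff_exp n a c r * inv_qfact a * inv_qfact (r + 1)"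
  shows "tcoeff_term k (n + 1) a c r
      = Z * (qv powi (4 * \<epsilon> * c - 2 * c - a - r) * qint (r + 1) * frakp_div (J + 1) k)"
    and "tcoeff_term k (n + 1) a (c + 1) r
      = Z * (qv powi (2 * c - 1 + a + r + \<epsilon> * (4 * c + 2)) * qint (r + 1) * frakp_div (J - 1) k)"
    and "tcoeff_term k (n - 1) a c r
      = Z * (qv powi (4 * \<epsilon> * c - 2 * c + a + r) * qint (r + 1) * frakp_div (J - 1) k)"
    and "tcoeff_term k (n - 1) a (c - 1) r
      = Z * (qv powi (4 * \<epsilon> * c - 6 * c + 5 - 2 * \<epsilon> - a - r) * qint (r + 1) * frakp_div (J + 1) k)"
proof -
  have shift: "tcoeff_term k n' a' c' r' = qv powi tcoeff_exp n a c r * qv powi e * frakp_div j k * inv_qfact a' * inv_qfact r'"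
    if "tcoeff_exp n' a' c' r' = tcoeff_exp n a c r + e" and "n' - a' - r' - 2 * c' = j" for n' a' c' r' e j
    using that by (rule tcoeff_term_shift)
  show "tcoeff_term k (n + 1) a c r
      = Z * (qv powi (4 * \<epsilon> * c - 2 * c - a - r) * qint (r + 1) * frakp_div (J + 1) k)"
    by (subst shift[where e = "4 * \<epsilon> * c - 2 * c - a - r" and j = "J + 1"])
      (simp_all add: Z_def tcoeff_exp_def J_def \<epsilon>_def inv_qfact_eq_Suc[of r] algebra_simps)
  show "tcoeff_term k (n + 1) a (c + 1) r
      = Z * (qv powi (2 * c - 1 + a + r + \<epsilon> * (4 * c + 2)) * qint (r + 1) * frakp_div (J - 1) k)"
    by (subst shift[where e = "2 * c - 1 + a + r + \<epsilon> * (4 * c + 2)" and j = "J - 1"])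
      (simp_all add: Z_def tcoeff_exp_def J_def \<epsilon>_def inv_qfact_eq_Suc[of r] algebra_simps)
  show "tcoeff_term k (n - 1) a c r
      = Z * (qv powi (4 * \<epsilon> * c - 2 * c + a + r) * qint (r + 1) * frakp_div (J - 1) k)"
    by (subst shift[where e = "4 * \<epsilon> * c - 2 * c + a + r" and j = "J - 1"])
      (simp_all add: Z_def tcoeff_exp_def J_def \<epsilon>_def inv_qfact_eq_Suc[of r] algebra_simps)
  show "tcoeff_term k (n - 1) a (c - 1) r
      = Z * (qv powi (4 * \<epsilon> * c - 6 * c + 5 - 2 * \<epsilon> - a - r) * qint (r + 1) * frakp_div (J + 1) k)"
    by (subst shift[where e = "4 * \<epsilon> * c - 6 * c + 5 - 2 * \<epsilon> - a - r" and j = "J + 1"])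
      (simp_all add: Z_def tcoeff_exp_def J_def \<epsilon>_def inv_qfact_eq_Suc[of r] algebra_simps)
qed

lemma tcoeff_term_recurrence_odd_to_even:
  fixes m a c r :: int and k :: Qq
  defines "n \<equiv> 2 * m - 1"
  shows "tcoeff_term k n a c (r - 1) + k * qv powi (- 2 * r) * tcoeff_term k n a c r
      + qv powi (2 * (a - 1 + r - n + 2 * c) - 2 * r) * tcoeff_term k n (a - 1) c r
      - qv powi (4 * (2 - m) - 4) * qv powi (2 * (a - 1 + r - n + 2 * (c + 1)) - 2 * r)
        * tcoeff_term k n (a - 1) (c + 1) r
      + \<gamma> (r + 1) * qv powi (4 * (2 - m) + 4 * c - 2) * tcoeff_term k n a c (r + 1)
      - \<gamma> (r + 1) * (qv powi -2 * (qv powi (4 * (c - 1) + 4) - 1)) * tcoeff_term k n a (c - 1) (r + 1)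
      + \<delta> (r + 1) * tcoeff_term k n a c (r + 1)
    = qint (2 * m) * tcoeff_term k (n + 1) a c r" (is "?L = ?R")
proof -
  define J where "J = n - a - r - 2 * c"
  define Z where "Z = qv powi tcoeff_exp n a c r * inv_qfact a * inv_qfact (r + 1)"
  define P1 P0 Pm1 where "P1 = frakp_div (J + 1) k" and "P0 = frakp_div J k" and "Pm1 = frakp_div (J - 1) k"
  note neighbours = tcoeff_term_neighbours[of k n a c r, folded J_def, folded Z_def P1_def P0_def Pm1_def]
    tcoeff_term_degree_neighbours(1)[of k n a c r, folded J_def, folded Z_def P1_def P0_def Pm1_def]
  define A C R M W where "A = qv powi a" and "C = qv powi c" and "R = qv powi r" and "M = qv powi m"
    and "W = qv ^ 2 - 1"
  have nonzero: "A \<noteq> 0" "C \<noteq> 0" "R \<noteq> 0" "M \<noteq> 0" "W \<noteq> 0"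
    using qv_square_minus_1_nonzero by (simp_all add: A_def C_def R_def M_def W_def)
  have "?L - ?R = Z * (- (qv powi (- 2 * r)) * qint (r + 1))
      * (qint (J + 1) * P1 - k * P0 - qv powi (2 - 2 * J) * qint (J - 2) * Pm1)"
    unfolding neighbours unfolding J_def n_def \<gamma>_def \<delta>_def qint_eq qv_minus_inverse W_def[symmetric]
    by (simp add: qv_powi_split A_def[symmetric] C_def[symmetric] R_def[symmetric] M_def[symmetric])
      (simp add: field_simps nonzero, unfold W_def, algebra)
  also have "\<dots> = 0"
    using frakp_div_recurrence[of J k] by (simp add: P1_def P0_def Pm1_def)
  finally show ?thesis by simp
qed

lemma tcoeff_term_recurrence_even_to_odd:
  fixes m a c r :: int and k :: Qq
  defines "n \<equiv> 2 * m"
  shows "tcoeff_term k n a c (r - 1) + k * qv powi (- 2 * r) * tcoeff_term k n a c r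
      + qv powi (2 * (a - 1 + r - n + 2 * c) - 2 * r) * tcoeff_term k n (a - 1) c r
      - qv powi (4 * (2 - m) - 4) * qv powi (2 * (a - 1 + r - n + 2 * (c + 1)) - 2 * r)
        * tcoeff_term k n (a - 1) (c + 1) r
      + \<gamma> (r + 1) * qv powi (4 * (2 - m) + 4 * c - 2) * tcoeff_term k n a c (r + 1)
      - \<gamma> (r + 1) * (qv powi -2 * (qv powi (4 * (c - 1) + 4) - 1)) * tcoeff_term k n a (c - 1) (r + 1)
      + \<delta> (r + 1) * tcoeff_term k n a c (r + 1)
      - qint n * (qv powi (4 * (2 - m) + 4 * c - 2) * tcoeff_term k (n - 1) a c r
        - qv powi -2 * (qv powi (4 * (c - 1) + 4) - 1) * tcoeff_term k (n - 1) a (c - 1) r)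
    = qint (n + 1) * (tcoeff_term k (n + 1) a c r - qv powi (4 * (2 - m) - 4) * tcoeff_term k (n + 1) a (c + 1) r)"
    (is "?L = ?R")
proof -
  define J where "J = n - a - r - 2 * c"
  define Z where "Z = qv powi tcoeff_exp n a c r * inv_qfact a * inv_qfact (r + 1)"
  define P1 P0 Pm1 where "P1 = frakp_div (J + 1) k" and "P0 = frakp_div J k" and "Pm1 = frakp_div (J - 1) k"
  note neighbours = tcoeff_term_neighbours[of k n a c r, folded J_def, folded Z_def P1_def P0_def Pm1_def]
    tcoeff_term_degree_neighbours[of k n a c r, folded J_def, folded Z_def P1_def P0_def Pm1_def]
  define A C R M W where "A = qv powi a" and "C = qv powi c" and "R = qv powi r" and "M = qv powi m"
    and "W = qv ^ 2 - 1"
  have nonzero: "A \<noteq> 0" "C \<noteq> 0" "R \<noteq> 0" "M \<noteq> 0" "W \<noteq> 0"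
    using qv_square_minus_1_nonzero by (simp_all add: A_def C_def R_def M_def W_def)
  have "?L - ?R = Z * (- (qv powi (- 2 * r)) * qint (r + 1))
      * (qint (J + 1) * P1 - k * P0 - qv powi (2 - 2 * J) * qint (J - 2) * Pm1)"
    unfolding neighbours unfolding J_def n_def \<gamma>_def \<delta>_def qint_eq qv_minus_inverse W_def[symmetric]
    by (simp add: qv_powi_split A_def[symmetric] C_def[symmetric] R_def[symmetric] M_def[symmetric])
      (simp add: field_simps nonzero, unfold W_def, algebra)
  also have "\<dots> = 0"
    using frakp_div_recurrence[of J k] by (simp add: P1_def P0_def Pm1_def)
  finally show ?thesis by simp
qed

lemma rewrite_coeffs_t_rule:
  "rewrite_coeffs (t_rule \<alpha> N k) D (a, c, r)
    = D (a, c, r - 1) + k * qv powi (- 2 * r) * D (a, c, r)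
      + qv powi (2 * (a - 1 + r - N + 2 * c) - 2 * r) * D (a - 1, c, r)
      - (if c + 1 = 0 then 0 else qv powi (4 * \<alpha> - 4) * qv powi (2 * (a - 1 + r - N + 2 * (c + 1)) - 2 * r))
        * D (a - 1, c + 1, r)
      + \<gamma> (r + 1) * qv powi (4 * \<alpha> + 4 * c - 2) * D (a, c, r + 1)
      - \<gamma> (r + 1) * (qv powi -2 * (qv powi (4 * (c - 1) + 4) - 1)) * D (a, c - 1, r + 1)
      + \<delta> (r + 1) * D (a, c, r + 1)"
  by (simp add: rewrite_coeffs_def t_rule_def algebra_simps)

lemma rewrite_coeffs_level_rule:
  "rewrite_coeffs (level_rule \<alpha>) D (a, c, r)
    = qv powi (4 * \<alpha> + 4 * c - 2) * D (a, c, r) - qv powi -2 * (qv powi (4 * (c - 1) + 4) - 1) * D (a, c - 1, r)"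
  by (simp add: rewrite_coeffs_def level_rule_def)

lemma rewrite_coeffs_alpha_rule:
  "rewrite_coeffs (alpha_rule \<alpha>) D (a, c, r)
    = D (a, c, r) - (if c + 1 = 0 then 0 else qv powi (4 * \<alpha> - 4)) * D (a, c + 1, r)"
  by (simp add: rewrite_coeffs_def alpha_rule_def)

lemma tcoeff_step_odd_to_even:
  "rewrite_coeffs (t_rule (2 - m) (2 * m - 1) k) (tcoeff k (2 * m - 1)) = (\<lambda>y. qint (2 * m) * tcoeff k (2 * m) y)"
proof (rule ext)
  fix y :: "int \<times> int \<times> int"
  obtain a c r where y: "y = (a, c, r)" by (cases y)
  show "rewrite_coeffs (t_rule (2 - m) (2 * m - 1) k) (tcoeff k (2 * m - 1)) y = qint (2 * m) * tcoeff k (2 * m) y"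
    using tcoeff_term_recurrence_odd_to_even[where m = m and k = k and a = a and c = c and r = r]
    by (cases "c < 0"; cases "c = 0") (simp_all add: y rewrite_coeffs_t_rule tcoeff_def)
qed

lemma tcoeff_step_even_to_odd:
  "rewrite_coeffs (t_rule (2 - m) (2 * m) k) (tcoeff k (2 * m)) y
      - qint (2 * m) * rewrite_coeffs (level_rule (2 - m)) (tcoeff k (2 * m - 1)) y
    = qint (2 * m + 1) * rewrite_coeffs (alpha_rule (2 - m)) (tcoeff k (2 * m + 1)) y"
proof -
  obtain a c r where y: "y = (a, c, r)" by (cases y)
  show ?thesis
    using tcoeff_term_recurrence_even_to_odd[where m = m and k = k and a = a and c = c and r = r]
    by (cases "c < 0"; cases "c = 0")
      (simp_all add: y rewrite_coeffs_t_rule rewrite_coeffs_level_rule rewrite_coeffs_alpha_rule tcoeff_def)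
qed

lemma int_choose_2_double: "int ((2 * c) choose 2) = int c * (2 * int c - 1)"
proof -
  have "(2 * c) choose 2 = (2 * c) * (2 * c - 1) div 2"
    by (simp add: choose_two)
  also have "\<dots> = c * (2 * c - 1)"
    by simp
  finally show ?thesis
    by (cases c) (simp_all add: of_nat_diff algebra_simps)
qed

lemma tcoeff_exp_eq:
  assumes "a \<le> b"
  shows "tcoeff_exp n (int a) (int c) (int (b - a))
    = int ((2 * c) choose 2) - (if even n then 2 * int c else 0)
      - int b * (n - int b - 2 * int c) - int a * (int b - int a)"
  unfolding int_choose_2_double using assms by (simp add: tcoeff_exp_def of_nat_diff algebra_simps)

context Qq_algebra
begin

lemma lincomb_tcoeff_eq_sum:
  assumes "n \<le> 2 * m"
  shows "lincomb B (tcoeff k (int n)) = (\<Sum>b\<in>{0..n}. \<Sum>a\<in>{0..b}. \<Sum>c\<in>{0..m}.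
    smul (tcoeff k (int n) (int a, int c, int (b - a))) (B (int a, int c, int (b - a))))"
proof -
  let ?T = "SIGMA b:{0..n}. SIGMA a:{0..b}. {0..m}"
  let ?h = "\<lambda>(b, a, c). (int a, int c, int (b - a))"
  have "{x. tcoeff k (int n) x \<noteq> 0} \<subseteq> ?h ` ?T"
  proof
    fix x assume "x \<in> {x. tcoeff k (int n) x \<noteq> 0}"
    moreover obtain a c r where x: "x = (a, c, r)" by (cases x)
    ultimately have "0 \<le> a" "0 \<le> c" "0 \<le> r" "a + r + 2 * c \<le> int n"
      using tcoeff_nonzero_imp by auto
    with assms have "(nat (a + r), nat a, nat c) \<in> ?T" "?h (nat (a + r), nat a, nat c) = x"
      by (auto simp: x nat_add_distrib)
    then show "x \<in> ?h ` ?T" by force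
  qed
  then have "lincomb B (tcoeff k (int n)) = (\<Sum>x\<in>?h ` ?T. smul (tcoeff k (int n) x) (B x))"
    by (rule lincomb_eq_sum[rotated]) auto
  also have "\<dots> = (\<Sum>(b, a, c)\<in>?T. smul (tcoeff k (int n) (int a, int c, int (b - a))) (B (int a, int c, int (b - a))))"
    by (subst sum.reindex) (auto simp: inj_on_def intro!: sum.cong)
  also have "\<dots> = (\<Sum>b\<in>{0..n}. \<Sum>(a, c)\<in>{0..b} \<times> {0..m}.
      smul (tcoeff k (int n) (int a, int c, int (b - a))) (B (int a, int c, int (b - a))))"
    by (rule sum.Sigma[symmetric]) auto
  also have "\<dots> = (\<Sum>b\<in>{0..n}. \<Sum>a\<in>{0..b}. \<Sum>c\<in>{0..m}.
      smul (tcoeff k (int n) (int a, int c, int (b - a))) (B (int a, int c, int (b - a))))"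
    by (simp only: sum.cartesian_product)
  finally show ?thesis .
qed

end

section \<open>The defining relations of \<open>U\<close>\<close>

locale U_algebra =
  fixes \<phi> :: "Qq \<Rightarrow> 'a::ring_1" and E F K Kinv :: 'a
  assumes U_rep: "U_rep \<phi> E F K Kinv"

sublocale U_algebra \<subseteq> Qq_algebra \<phi>
  using U_rep unfolding U_rep_def by unfold_locales blast+

context U_algebra
begin

lemma K_Kinv: "K * Kinv = 1"
  using U_rep unfolding U_rep_def by blast

lemma Kinv_K: "Kinv * K = 1"
  using U_rep unfolding U_rep_def by blast

lemma E_F: "E * F = F * E + smul (1 / (qv - qv powi -1)) (K - Kinv)"
proof -
  have "E * F - F * E = \<phi> (1 / (qv - qv powi -1)) * (K - Kinv)"
    using U_rep unfolding U_rep_def by blast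
  then show ?thesis by (simp add: smul_def algebra_simps)
qed

lemma K_E: "K * E = smul (qv ^ 2) (E * K)"
proof -
  have "K * E = \<phi> (qv ^ 2) * E * K"
    using U_rep unfolding U_rep_def by blast
  then show ?thesis by (simp add: smul_def mult.assoc)
qed

lemma K_F: "K * F = smul (qv powi -2) (F * K)"
proof -
  have "K * F = \<phi> (qv powi -2) * F * K"
    using U_rep unfolding U_rep_def by blast
  then show ?thesis by (simp add: smul_def mult.assoc)
qed

abbreviation Kp :: "int \<Rightarrow> 'a" where
  "Kp \<equiv> Kpow K Kinv"

lemma Kp_0 [simp]: "Kp 0 = 1"
  by (simp add: Kpow_def)

lemma Kp_plus_1: "Kp (i + 1) = Kp i * K"
proof (cases "i \<ge> 0")
  case True
  then have "nat (i + 1) = Suc (nat i)" by simp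
  with True show ?thesis by (simp add: Kpow_def power_Suc2 power_commutes)
next
  case False
  then have "nat (- i) = Suc (nat (- (i + 1)))"
    by simp
  then have "Kinv ^ nat (- i) * K = Kinv ^ nat (- (i + 1))"
    by (simp only: power_Suc2 mult.assoc Kinv_K mult_1_right)
  with False show ?thesis by (auto simp: Kpow_def)
qed

lemma Kp_minus_1: "Kp (i - 1) = Kp i * Kinv"
proof -
  have "Kp i * Kinv = Kp (i - 1) * K * Kinv"
    using Kp_plus_1[of "i - 1"] by simp
  then show ?thesis by (simp add: mult.assoc K_Kinv)
qed

lemma Kp_add: "Kp (i + j) = Kp i * Kp j"
proof (induction j rule: int_induct[of _ 0])
  case (step1 j)
  then show ?case using Kp_plus_1[of "i + j"] by (simp add: Kp_plus_1 add.assoc mult.assoc)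
next
  case (step2 j)
  then show ?case using Kp_minus_1[of "i + j"] by (simp add: Kp_minus_1 algebra_simps)
qed simp

lemma Kp_commute: "Kp i * Kp j = Kp j * Kp i"
  by (metis Kp_add add.commute)

lemma Kp_uminus_1: "Kp (- 1) = Kinv"
  using Kp_minus_1[of 0] by simp

lemma Kp_minus_2_eq: "Kinv ^ 2 = Kp (- 2)"
  by (simp add: Kpow_def)

lemma Kp_swap:
  assumes K_x: "K * x = smul c (x * K)" and "c \<noteq> 0"
  shows "Kp i * x = smul (c powi i) (x * Kp i)"
proof -
  have "x * Kinv = Kinv * (K * x) * Kinv"
    by (simp add: mult.assoc[symmetric] Kinv_K)
  also have "\<dots> = smul c (Kinv * x)"
    by (simp add: K_x mult.assoc K_Kinv)
  finally have Kinv_x: "Kinv * x = smul (inverse c) (x * Kinv)"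
    using \<open>c \<noteq> 0\<close> by simp
  show ?thesis
  proof (induction i rule: int_induct[of _ 0])
    case (step1 i)
    then have "Kp (i + 1) * x = smul (c powi i * c) (x * Kp (i + 1))"
      by (simp add: Kp_plus_1 mult.assoc K_x) (simp add: mult.assoc[symmetric] mult.commute)
    with \<open>c \<noteq> 0\<close> show ?case by (simp add: power_int_add)
  next
    case (step2 i)
    then have "Kp (i - 1) * x = smul (c powi i * inverse c) (x * Kp (i - 1))"
      by (simp add: Kp_minus_1 mult.assoc Kinv_x) (simp add: mult.assoc[symmetric] mult.commute)
    with \<open>c \<noteq> 0\<close> show ?case by (simp add: power_int_diff divide_inverse)
  qed simp
qed

abbreviation Ec :: 'a where
  "Ec \<equiv> Echk \<phi> E Kinv"

lemma Ec_eq: "Ec = smul (qv powi -1) (E * Kinv)"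
  by (simp add: Echk_def smul_def mult.assoc)

lemma K_Ec: "K * Ec = smul (qv ^ 2) (Ec * K)"
proof -
  have "K * Ec = smul (qv powi -1 * qv ^ 2) (E * K * Kinv)"
    by (simp add: Ec_eq K_E mult.assoc[symmetric])
  moreover have "E * K * Kinv = E" "Ec * K = smul (qv powi -1) E"
    by (simp_all add: Ec_eq mult.assoc K_Kinv Kinv_K)
  ultimately show ?thesis by (simp add: mult.commute)
qed

lemma Kp_Ec: "Kp i * Ec = smul (qv powi (2 * i)) (Ec * Kp i)"
  using Kp_swap[OF K_Ec] by (simp add: power_int_mult)

lemma Kp_F: "Kp i * F = smul (qv powi (- 2 * i)) (F * Kp i)"
  using Kp_swap[OF K_F] by (simp add: power_int_mult[symmetric])

lemma Kinv_F: "Kinv * F = smul (qv ^ 2) (F * Kinv)"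
  using Kp_F[of "- 1"] by (simp add: Kp_uminus_1)

lemma F_Kp: "F * Kp i = smul (qv powi (2 * i)) (Kp i * F)"
  by (simp add: Kp_F flip: power_int_add)

lemma Fpow_Kp: "F ^ n * Kp i = smul (qv powi (2 * int n * i)) (Kp i * F ^ n)"
proof (induction n)
  case (Suc n)
  have "F ^ Suc n * Kp i = F * (F ^ n * Kp i)"
    by (simp add: mult.assoc)
  also have "\<dots> = smul (qv powi (2 * int n * i) * qv powi (2 * i)) (Kp i * F ^ Suc n)"
    by (simp add: Suc F_Kp mult.assoc[symmetric])
  finally show ?case
    by (simp add: algebra_simps flip: power_int_add)
qed simp

lemma F_Ec: "F * Ec = smul (qv powi -2) (Ec * F) - smul (qv powi -1 / (qv - qv powi -1)) (1 - Kp (- 2))"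
proof -
  have q: "qv powi -1 * qv ^ 2 = qv" "qv ^ 2 * qv powi -1 = qv"
    by (simp_all add: power_int_minus power2_eq_square)
  have "Ec * F = smul (qv powi -1 * qv ^ 2) (E * F * Kinv)"
    by (simp add: Ec_eq Kinv_F mult.assoc)
  also have "\<dots> = smul qv (F * E * Kinv) + smul (qv / (qv - qv powi -1)) (1 - Kp (- 2))"
    unfolding q by (simp add: E_F Kp_minus_2_eq[symmetric] algebra_simps smul_distribs K_Kinv power2_eq_square)
  also have "smul qv (F * E * Kinv) = smul (qv ^ 2) (F * Ec)"
    by (simp add: Ec_eq mult.assoc power2_eq_square)
  finally have "smul (qv powi -2) (Ec * F)
      = smul (qv powi -2 * qv ^ 2) (F * Ec) + smul (qv powi -2 * (qv / (qv - qv powi -1))) (1 - Kp (- 2))"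
    by (simp add: smul_distribs)
  then show ?thesis
    by (simp add: power_int_minus power2_eq_square field_simps)
qed

lemma Fpow_Ec:
  "F ^ r * Ec = smul (qv powi (- 2 * int r)) (Ec * F ^ r)
    + smul (\<gamma> (int r)) (F ^ (r - 1)) + smul (\<delta> (int r)) (Kp (- 2) * F ^ (r - 1))"
proof (induction r)
  case (Suc r)
  define g where "g = qv powi (- 2 * int r) * qv powi -1 / (qv - qv powi -1)"
  have F_Kp2: "F * Kp (- 2) = smul (qv powi -4) (Kp (- 2) * F)"
    using F_Kp[of "- 2"] by simp
  have exp: "qv powi (- 2 * int (Suc r)) = qv powi (- 2 * int r) * qv powi -2"
    using power_int_add[of qv "- 2 * int r" "- 2"] by (simp add: algebra_simps)
  have "F ^ Suc r * Ec = smul (qv powi (- 2 * int r)) (F * Ec * F ^ r)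
      + smul (\<gamma> (int r)) (F * F ^ (r - 1)) + smul (\<delta> (int r)) (F * Kp (- 2) * F ^ (r - 1))"
    by (simp add: Suc distrib_left mult.assoc)
  also have "\<dots> = smul (qv powi (- 2 * int (Suc r))) (Ec * F ^ Suc r)
      - smul g (F ^ r) + smul g (Kp (- 2) * F ^ r)
      + smul (\<gamma> (int r)) (F * F ^ (r - 1)) + smul (\<delta> (int r) * qv powi -4) (Kp (- 2) * (F * F ^ (r - 1)))"
    unfolding exp by (simp add: F_Ec F_Kp2 g_def left_diff_distrib smul_distribs mult.assoc)
  also have "\<dots> = smul (qv powi (- 2 * int (Suc r))) (Ec * F ^ Suc r)
      + smul (\<gamma> (int (Suc r))) (F ^ r) + smul (\<delta> (int (Suc r))) (Kp (- 2) * F ^ r)"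
  proof (cases r)
    case 0
    then show ?thesis
      using \<gamma>_plus_1[of 0] \<delta>_plus_1[of 0] by (simp add: g_def smul_distribs)
  next
    case (Suc r')
    then have "F * F ^ (r - 1) = F ^ r" by simp
    then show ?thesis
      using \<gamma>_plus_1[of "int r"] \<delta>_plus_1[of "int r"]
      by (simp add: g_def smul_distribs add.commute)
  qed
  finally show ?case by simp
qed simp

section \<open>The elements \<open>{h;\<alpha> over c}\<close>\<close>

definition hfactor :: "Qq \<Rightarrow> 'a" where
  "hfactor x = smul x (Kp (- 2)) - smul (qv ^ 2) 1"

fun hbr_num :: "int \<Rightarrow> nat \<Rightarrow> 'a" where
  "hbr_num \<alpha> 0 = 1"
| "hbr_num \<alpha> (Suc n) = hbr_num \<alpha> n * hfactor (qv powi (4 * \<alpha> + 4 * int (Suc n) - 4))"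

lemma hbr_Suc_eq:
  "hbr \<phi> Kinv \<alpha> (Suc n)
    = smul (1 / (qv ^ (4 * Suc n) - 1)) (hbr \<phi> Kinv \<alpha> n * hfactor (qv powi (4 * \<alpha> + 4 * int (Suc n) - 4)))"
proof -
  have "\<phi> x * Kinv ^ 2 - \<phi> (qv ^ 2) = hfactor x" for x
    by (simp add: hfactor_def smul_def Kp_minus_2_eq)
  then show ?thesis
    by (simp only: hbr.simps phi_eq_smul smul_mult_right smul_mult_left mult_1_right)
qed

lemma hbr_eq_num: "hbr \<phi> Kinv \<alpha> n = smul (1 / hbr_den n) (hbr_num \<alpha> n)"
  by (induction n) (simp_all add: hbr_Suc_eq mult.commute del: hbr.simps(2))

lemma hfactor_Kp_commute: "hfactor x * Kp j = Kp j * hfactor x"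
  by (simp add: hfactor_def left_diff_distrib right_diff_distrib Kp_commute)

lemma hbr_num_Kp_commute: "hbr_num \<alpha> n * Kp j = Kp j * hbr_num \<alpha> n"
  by (induction n) (simp_all add: mult.assoc hfactor_Kp_commute, simp_all add: mult.assoc[symmetric])

lemma hbr_num_hfactor_commute: "hbr_num \<alpha> n * hfactor x = hfactor x * hbr_num \<alpha> n"
  by (simp add: hfactor_def left_diff_distrib right_diff_distrib hbr_num_Kp_commute)

lemma hfactor_Ec: "hfactor x * Ec = Ec * hfactor (x * qv powi -4)"
  using Kp_Ec[of "- 2"] by (simp add: hfactor_def left_diff_distrib right_diff_distrib smul_distribs mult.commute)

lemma hbr_num_Ec: "hbr_num \<alpha> n * Ec = Ec * hbr_num (\<alpha> - 1) n"
proof (induction n)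
  case (Suc n)
  have "qv powi (4 * \<alpha> + 4 * int (Suc n) - 4) * qv powi -4 = qv powi (4 * (\<alpha> - 1) + 4 * int (Suc n) - 4)"
    by (simp add: algebra_simps flip: power_int_add)
  then show ?case
    by (simp only: hbr_num.simps mult.assoc hfactor_Ec) (simp only: Suc mult.assoc[symmetric])
qed simp

lemma hbr_num_pred_Suc: "hbr_num (\<alpha> - 1) (Suc c) = hfactor (qv powi (4 * \<alpha> - 4)) * hbr_num \<alpha> c"
proof (induction c)
  case (Suc c)
  have "4 * (\<alpha> - 1) + 4 * int (Suc (Suc c)) - 4 = 4 * \<alpha> + 4 * int (Suc c) - 4"
    by simp
  with Suc show ?case
    by (simp only: hbr_num.simps(2)[of "\<alpha> - 1" "Suc c"] hbr_num.simps(2)[of \<alpha> c] mult.assoc)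
qed (simp add: algebra_simps)

lemma hbr_Kp_commute: "hbr \<phi> Kinv \<alpha> c * Kp j = Kp j * hbr \<phi> Kinv \<alpha> c"
  by (simp add: hbr_eq_num hbr_num_Kp_commute del: hbr.simps)

lemma hbr_Ec: "hbr \<phi> Kinv \<alpha> c * Ec = Ec * hbr \<phi> Kinv (\<alpha> - 1) c"
  by (simp add: hbr_eq_num hbr_num_Ec del: hbr.simps)

lemma hbr_pred_Suc:
  "hbr \<phi> Kinv (\<alpha> - 1) (Suc c)
    = hbr \<phi> Kinv \<alpha> (Suc c) - smul (qv powi (4 * \<alpha> - 4)) (Kp (- 2) * hbr \<phi> Kinv \<alpha> c)"
proof -
  define x where "x = qv powi (4 * \<alpha> - 4)"
  define d where "d = qv ^ (4 * Suc c) - 1"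
  have x_Suc: "qv powi (4 * \<alpha> + 4 * int c) = x * (d + 1)"
    by (simp add: x_def d_def algebra_simps flip: power_int_add power_int_of_nat)
  have "hbr_num (\<alpha> - 1) (Suc c) = hbr_num \<alpha> c * hfactor x"
    by (simp add: hbr_num_pred_Suc hbr_num_hfactor_commute x_def del: hbr_num.simps)
  moreover have "hbr_num \<alpha> (Suc c) = hbr_num \<alpha> c * hfactor (x * (d + 1))"
    by (simp add: x_Suc)
  ultimately have "hbr \<phi> Kinv (\<alpha> - 1) (Suc c) - hbr \<phi> Kinv \<alpha> (Suc c)
      = smul (1 / hbr_den (Suc c)) (hbr_num \<alpha> c * (hfactor x - hfactor (x * (d + 1))))"
    by (simp add: hbr_eq_num right_diff_distrib smul_distribs del: hbr.simps hbr_num.simps)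
  also have "hfactor x - hfactor (x * (d + 1)) = smul (- x * d) (Kp (- 2))"
    by (simp add: hfactor_def smul_distribs algebra_simps)
  also have "smul (1 / hbr_den (Suc c)) (hbr_num \<alpha> c * smul (- x * d) (Kp (- 2)))
      = - smul x (Kp (- 2) * hbr \<phi> Kinv \<alpha> c)"
    using hbr_den_nonzero[of c] qv_power_4_Suc_minus_1_nonzero[of c]
    by (simp add: hbr_eq_num hbr_num_Kp_commute d_def smul_distribs del: hbr.simps)
  finally show ?thesis
    by (simp add: x_def algebra_simps del: hbr.simps)
qed

text \<open>The defining recurrence of \<open>{h;\<alpha> over c}\<close>, solved for the lower term.\<close>
lemma hbr_eq_Suc:
  "hbr \<phi> Kinv \<alpha> c = smul (qv powi (4 * \<alpha> + 4 * int c - 2)) (hbr \<phi> Kinv \<alpha> c * Kp (- 2))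
    - smul (qv powi -2 * (qv powi (4 * int c + 4) - 1)) (hbr \<phi> Kinv \<alpha> (Suc c))"
proof -
  define x where "x = qv powi (4 * \<alpha> + 4 * int (Suc c) - 4)"
  define d where "d = qv ^ (4 * Suc c) - 1"
  have "smul d (hbr \<phi> Kinv \<alpha> (Suc c))
      = smul x (hbr \<phi> Kinv \<alpha> c * Kp (- 2)) - smul (qv ^ 2) (hbr \<phi> Kinv \<alpha> c)"
    using qv_power_4_Suc_minus_1_nonzero[of c]
    by (simp add: hbr_Suc_eq hfactor_def right_diff_distrib smul_distribs x_def d_def del: hbr.simps)
  then have "smul (qv ^ 2) (hbr \<phi> Kinv \<alpha> c)
      = smul x (hbr \<phi> Kinv \<alpha> c * Kp (- 2)) - smul d (hbr \<phi> Kinv \<alpha> (Suc c))"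
    by (simp add: algebra_simps)
  then have "smul (qv powi -2) (smul (qv ^ 2) (hbr \<phi> Kinv \<alpha> c))
      = smul (qv powi -2 * x) (hbr \<phi> Kinv \<alpha> c * Kp (- 2)) - smul (qv powi -2 * d) (hbr \<phi> Kinv \<alpha> (Suc c))"
    by (simp add: smul_distribs)
  moreover have "qv powi -2 * qv ^ 2 = 1"
    by (simp add: power_int_minus)
  moreover have "qv powi -2 * x = qv powi (4 * \<alpha> + 4 * int c - 2)"
    using power_int_add[of qv "- 2" "4 * \<alpha> + 4 * int (Suc c) - 4"] by (simp add: x_def algebra_simps)
  moreover have "d = qv powi (4 * int c + 4) - 1"
    by (simp add: d_def algebra_simps flip: power_int_of_nat)
  ultimately show ?thesis
    by simp
qed

section \<open>Right multiplication of monomials by \<open>t\<close>\<close>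

text \<open>With \<open>b = a + r\<close> these are the summands of the theorem without their divided-power
  normalisation; \<open>N\<close> is the degree of the divided power being expanded.\<close>
definition pbw :: "int \<Rightarrow> int \<Rightarrow> int \<times> int \<times> int \<Rightarrow> 'a" where
  "pbw \<alpha> N x = (case x of (a, c, r) \<Rightarrow>
     Ec ^ nat a * hbr \<phi> Kinv \<alpha> (nat c) * Kp (a + r - N + 2 * c) * F ^ nat r)"

lemma pbw_eq:
  "a + r - N + 2 * c = s \<Longrightarrow> pbw \<alpha> N (a, c, r) = Ec ^ nat a * hbr \<phi> Kinv \<alpha> (nat c) * Kp s * F ^ nat r"
  by (simp add: pbw_def)

lemma pbw_times_F:
  "0 \<le> r \<Longrightarrow> pbw \<alpha> N (a, c, r) * F = pbw \<alpha> (N + 1) (a, c, r + 1)"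
  by (simp add: pbw_def nat_add_distrib mult.assoc power_commutes algebra_simps)

lemma pbw_times_Kinv:
  "0 \<le> r \<Longrightarrow> pbw \<alpha> N (a, c, r) * Kinv = smul (qv powi (- 2 * r)) (pbw \<alpha> (N + 1) (a, c, r))"
  using Fpow_Kp[of "nat r" "- 1"] Kp_minus_1[of "a + r - N + 2 * c"]
  by (simp add: pbw_def mult.assoc Kp_uminus_1 algebra_simps)

lemma pbw_times_Ec:
  assumes "0 \<le> a" "0 \<le> r"
  shows "pbw \<alpha> N (a, c, r) * Ec
    = smul (qv powi (2 * (a + r - N + 2 * c) - 2 * r)) (pbw (\<alpha> - 1) (N + 1) (a + 1, c, r))
      + smul (\<gamma> r) (pbw \<alpha> (N - 1) (a, c, r - 1)) + smul (\<delta> r) (pbw \<alpha> (N + 1) (a, c, r - 1))"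
proof -
  define s where "s = a + r - N + 2 * c"
  define x where "x = Ec ^ nat a * hbr \<phi> Kinv \<alpha> (nat c)"
  have "Ec ^ nat a * hbr \<phi> Kinv \<alpha> (nat c) * (Kp s * Ec)
      = smul (qv powi (2 * s)) (Ec ^ nat a * (hbr \<phi> Kinv \<alpha> (nat c) * Ec) * Kp s)"
    by (simp add: Kp_Ec mult.assoc)
  also have "Ec ^ nat a * (hbr \<phi> Kinv \<alpha> (nat c) * Ec) = Ec ^ nat (a + 1) * hbr \<phi> Kinv (\<alpha> - 1) (nat c)"
    using assms by (simp add: hbr_Ec nat_add_distrib mult.assoc[symmetric] power_commutes del: hbr.simps)
  finally have "Ec ^ nat a * hbr \<phi> Kinv \<alpha> (nat c) * (Kp s * Ec)
      = smul (qv powi (2 * s)) (Ec ^ nat (a + 1) * hbr \<phi> Kinv (\<alpha> - 1) (nat c) * Kp s)" .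
  then have "x * Kp s * Ec * F ^ nat r
      = smul (qv powi (2 * s)) (pbw (\<alpha> - 1) (N + 1) (a + 1, c, r))"
    by (simp add: x_def pbw_eq[where s = s] s_def mult.assoc)
  moreover have "nat (r - 1) = nat r - 1"
    by linarith
  moreover have "x * Kp s * F ^ (nat r - 1) = pbw \<alpha> (N - 1) (a, c, r - 1)"
    "x * Kp s * (Kp (- 2) * F ^ (nat r - 1)) = pbw \<alpha> (N + 1) (a, c, r - 1)"
    using Kp_add[of s "- 2"] \<open>nat (r - 1) = nat r - 1\<close>
    by (simp_all add: x_def pbw_eq[where s = s] pbw_eq[where s = "s - 2"] s_def mult.assoc)
  moreover have "pbw \<alpha> N (a, c, r) * Ec = x * Kp s * (F ^ nat r * Ec)"
    by (simp add: x_def s_def pbw_def mult.assoc)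
  moreover have "qv powi (- 2 * r) * qv powi (2 * s) = qv powi (2 * s - 2 * r)"
    using power_int_add[of qv "- 2 * r" "2 * s"] by simp
  ultimately show ?thesis
    unfolding s_def[symmetric] using assms by (simp add: Fpow_Ec distrib_left mult.assoc)
qed

lemma pbw_lower_alpha:
  assumes "0 \<le> c"
  shows "pbw (\<alpha> - 1) N (a, c, r)
    = pbw \<alpha> N (a, c, r) - smul (if c = 0 then 0 else qv powi (4 * \<alpha> - 4)) (pbw \<alpha> N (a, c - 1, r))"
proof (cases "c = 0")
  case False
  with assms have "nat c = Suc (nat (c - 1))" by simp
  then have h: "hbr \<phi> Kinv (\<alpha> - 1) (nat c) = hbr \<phi> Kinv \<alpha> (nat c)
      - smul (qv powi (4 * \<alpha> - 4)) (Kp (- 2) * hbr \<phi> Kinv \<alpha> (nat (c - 1)))"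
    by (simp add: hbr_pred_Suc del: hbr.simps)
  have "Kp (- 2) * (hbr \<phi> Kinv \<alpha> (nat (c - 1)) * (Kp (a + r - N + 2 * c) * y))
      = hbr \<phi> Kinv \<alpha> (nat (c - 1)) * (Kp (a + r - N + 2 * (c - 1)) * y)" for y
    by (simp add: hbr_Kp_commute mult.assoc[symmetric] Kp_add[symmetric] del: hbr.simps)
      (simp add: mult.assoc algebra_simps)
  with False show ?thesis
    by (simp add: pbw_def h left_diff_distrib right_diff_distrib mult.assoc del: hbr.simps)
qed (simp add: pbw_def)

lemma pbw_raise_level:
  assumes "0 \<le> c"
  shows "pbw \<alpha> N (a, c, r) = smul (qv powi (4 * \<alpha> + 4 * c - 2)) (pbw \<alpha> (N + 2) (a, c, r))
    - smul (qv powi -2 * (qv powi (4 * c + 4) - 1)) (pbw \<alpha> (N + 2) (a, c + 1, r))"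
proof -
  define s where "s = a + r - N + 2 * c"
  have "hbr \<phi> Kinv \<alpha> (nat c) = smul (qv powi (4 * \<alpha> + 4 * c - 2)) (hbr \<phi> Kinv \<alpha> (nat c) * Kp (- 2))
    - smul (qv powi -2 * (qv powi (4 * c + 4) - 1)) (hbr \<phi> Kinv \<alpha> (nat (c + 1)))"
    using hbr_eq_Suc[of \<alpha> "nat c"] assms by (simp add: nat_add_distrib del: hbr.simps)
  then have "pbw \<alpha> N (a, c, r) = Ec ^ nat a * (smul (qv powi (4 * \<alpha> + 4 * c - 2)) (hbr \<phi> Kinv \<alpha> (nat c) * Kp (- 2))
    - smul (qv powi -2 * (qv powi (4 * c + 4) - 1)) (hbr \<phi> Kinv \<alpha> (nat (c + 1)))) * Kp s * F ^ nat r"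
    unfolding pbw_eq[OF s_def[symmetric]] by (rule arg_cong[where f = "\<lambda>z. Ec ^ nat a * z * Kp s * F ^ nat r"])
  moreover have "Kp (- 2) * (Kp s * y) = Kp (s - 2) * y" for y
    by (simp add: mult.assoc[symmetric] Kp_add[symmetric] algebra_simps)
  ultimately show ?thesis
    by (simp add: pbw_eq[where s = s] pbw_eq[where s = "s - 2"] s_def left_diff_distrib
        right_diff_distrib mult.assoc del: hbr.simps)
qed

lemma pbw_times_t:
  assumes "0 \<le> a" "0 \<le> c" "0 \<le> r"
  shows "pbw \<alpha> N (a, c, r) * (F + Ec + \<phi> k * Kinv)
    = (\<Sum>(f, d)\<leftarrow>t_rule \<alpha> N k. smul (f (a, c, r)) (pbw \<alpha> (N + 1) ((a, c, r) + d)))"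
proof -
  have "pbw \<alpha> (N - 1) (a, c, r - 1)
      = smul (qv powi (4 * \<alpha> + 4 * c - 2)) (pbw \<alpha> (N + 1) (a, c, r - 1))
        - smul (qv powi -2 * (qv powi (4 * c + 4) - 1)) (pbw \<alpha> (N + 1) (a, c + 1, r - 1))"
    using pbw_raise_level[OF assms(2), of \<alpha> "N - 1" a "r - 1"] by (simp add: add.commute[of 1 N])
  with assms show ?thesis
    by (simp add: distrib_left phi_eq_smul pbw_times_F pbw_times_Kinv pbw_times_Ec
        pbw_lower_alpha t_rule_def smul_distribs add_ac mult.commute)
qed

lemma pbw_level_rule:
  assumes "0 \<le> c"
  shows "pbw \<alpha> N (a, c, r) = (\<Sum>(f, d)\<leftarrow>level_rule \<alpha>. smul (f (a, c, r)) (pbw \<alpha> (N + 2) ((a, c, r) + d)))"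
  unfolding pbw_raise_level[OF assms, where \<alpha> = \<alpha> and N = N and a = a and r = r]
  by (simp add: level_rule_def smul_minus_left)

lemma pbw_alpha_rule:
  assumes "0 \<le> c"
  shows "pbw (\<alpha> - 1) N (a, c, r) = (\<Sum>(f, d)\<leftarrow>alpha_rule \<alpha>. smul (f (a, c, r)) (pbw \<alpha> N ((a, c, r) + d)))"
  using assms by (simp add: pbw_lower_alpha alpha_rule_def smul_minus_left)

lemma lincomb_pbw_times_t:
  assumes "finite {x. D x \<noteq> 0}" and "\<And>a c r. D (a, c, r) \<noteq> 0 \<Longrightarrow> 0 \<le> a \<and> 0 \<le> c \<and> 0 \<le> r"
  shows "lincomb (pbw \<alpha> N) D * (F + Ec + \<phi> k * Kinv) = lincomb (pbw \<alpha> (N + 1)) (rewrite_coeffs (t_rule \<alpha> N k) D)"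
  unfolding lincomb_mult_right[OF assms(1)]
  by (rule lincomb_rewrite_coeffs[OF assms(1)]) (use assms(2) pbw_times_t in force)

lemma lincomb_pbw_level_rule:
  assumes "finite {x. D x \<noteq> 0}" and "\<And>a c r. D (a, c, r) \<noteq> 0 \<Longrightarrow> 0 \<le> c"
  shows "lincomb (pbw \<alpha> N) D = lincomb (pbw \<alpha> (N + 2)) (rewrite_coeffs (level_rule \<alpha>) D)"
  by (rule lincomb_rewrite_coeffs[OF assms(1)]) (use assms(2) pbw_level_rule in force)

lemma lincomb_pbw_alpha_rule:
  assumes "finite {x. D x \<noteq> 0}" and "\<And>a c r. D (a, c, r) \<noteq> 0 \<Longrightarrow> 0 \<le> c"
  shows "lincomb (pbw (\<alpha> - 1) N) D = lincomb (pbw \<alpha> N) (rewrite_coeffs (alpha_rule \<alpha>) D)"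
  by (rule lincomb_rewrite_coeffs[OF assms(1)]) (use assms(2) pbw_alpha_rule in force)

section \<open>Expansion of the divided powers of \<open>t\<close>\<close>

lemma tdot_expansion_1: "lincomb (pbw 1 1) (tcoeff k 1) = F + Ec + \<phi> k * Kinv"
proof -
  have "lincomb (pbw 1 1) (tcoeff k 1)
      = (\<Sum>x\<in>{(0, 0, 0), (1, 0, 0), (0, 0, 1)}. smul (tcoeff k 1 x) (pbw 1 1 x))"
    by (rule lincomb_eq_sum) (use tcoeff_nonzero_imp in force)+
  moreover have "tcoeff k 1 (0, 0, 0) = k" "tcoeff k 1 (1, 0, 0) = 1" "tcoeff k 1 (0, 0, 1) = 1"
    by (simp_all add: tcoeff_def tcoeff_term_def tcoeff_exp_def frakp_div_def inv_qfact_def qfact_def)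
  moreover have "pbw 1 1 (0, 0, 0) = Kinv" "pbw 1 1 (1, 0, 0) = Ec" "pbw 1 1 (0, 0, 1) = F"
    by (simp_all add: pbw_def Kp_uminus_1)
  ultimately show ?thesis
    by (simp add: phi_eq_smul add_ac)
qed

lemma tdot_expansion_even_step:
  assumes m: "1 \<le> m"
    and odd: "tdot \<phi> (F + Ec + \<phi> k * Kinv) (2 * m - 1)
      = lincomb (pbw (2 - int m) (2 * int m - 1)) (tcoeff k (2 * int m - 1))"
  shows "tdot \<phi> (F + Ec + \<phi> k * Kinv) (2 * m) = lincomb (pbw (2 - int m) (2 * int m)) (tcoeff k (2 * int m))"
proof -
  let ?t = "F + Ec + \<phi> k * Kinv" and ?\<alpha> = "2 - int m"
  have "smul (qint (2 * int m)) (tdot \<phi> ?t (2 * m)) = tdot \<phi> ?t (2 * m - 1) * ?t"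
    by (rule tdot_even_step[OF m])
  also have "\<dots> = lincomb (pbw ?\<alpha> (2 * int m)) (rewrite_coeffs (t_rule ?\<alpha> (2 * int m - 1) k) (tcoeff k (2 * int m - 1)))"
    unfolding odd using lincomb_pbw_times_t[OF finite_support_tcoeff tcoeff_support_nonneg[of k]] by simp
  also have "\<dots> = smul (qint (2 * int m)) (lincomb (pbw ?\<alpha> (2 * int m)) (tcoeff k (2 * int m)))"
    by (simp add: tcoeff_step_odd_to_even lincomb_smul[OF finite_support_tcoeff])
  finally show ?thesis
    using m qint_nonzero[of "2 * int m"] by (simp add: smul_left_inject)
qed

lemma tdot_expansion_odd_step:
  assumes m: "1 \<le> m"
    and odd: "tdot \<phi> (F + Ec + \<phi> k * Kinv) (2 * m - 1)
      = lincomb (pbw (2 - int m) (2 * int m - 1)) (tcoeff k (2 * int m - 1))"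
    and even: "tdot \<phi> (F + Ec + \<phi> k * Kinv) (2 * m) = lincomb (pbw (2 - int m) (2 * int m)) (tcoeff k (2 * int m))"
  shows "tdot \<phi> (F + Ec + \<phi> k * Kinv) (2 * m + 1)
    = lincomb (pbw (1 - int m) (2 * int m + 1)) (tcoeff k (2 * int m + 1))"
proof -
  let ?t = "F + Ec + \<phi> k * Kinv" and ?\<alpha> = "2 - int m" and ?B = "pbw (2 - int m) (2 * int m + 1)"
  let ?S = "rewrite_coeffs (t_rule ?\<alpha> (2 * int m) k) (tcoeff k (2 * int m))"
    and ?H = "rewrite_coeffs (level_rule ?\<alpha>) (tcoeff k (2 * int m - 1))"
    and ?C = "rewrite_coeffs (alpha_rule ?\<alpha>) (tcoeff k (2 * int m + 1))"
  have finite: "finite {y. ?S y \<noteq> 0}" "finite {y. ?H y \<noteq> 0}" "finite {y. ?C y \<noteq> 0}"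
    by (rule finite_support_rewrite_coeffs[OF finite_support_tcoeff])+
  have "smul (qint (2 * int m + 1)) (tdot \<phi> ?t (2 * m + 1))
      = tdot \<phi> ?t (2 * m) * ?t - smul (qint (2 * int m)) (tdot \<phi> ?t (2 * m - 1))"
    by (rule tdot_odd_step[OF m])
  also have "\<dots> = lincomb ?B ?S - smul (qint (2 * int m)) (lincomb ?B ?H)"
    unfolding odd even
    using lincomb_pbw_times_t[OF finite_support_tcoeff tcoeff_support_nonneg[of k]]
      lincomb_pbw_level_rule[OF finite_support_tcoeff, of k "2 * int m - 1"] tcoeff_support_nonneg
    by (simp add: add.commute[of 1])
  also have "\<dots> = lincomb ?B (\<lambda>y. qint (2 * int m + 1) * ?C y)"
    using finite by (simp add: lincomb_smul lincomb_diff tcoeff_step_even_to_odd)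
  also have "\<dots> = smul (qint (2 * int m + 1)) (lincomb (pbw (1 - int m) (2 * int m + 1)) (tcoeff k (2 * int m + 1)))"
    using lincomb_pbw_alpha_rule[OF finite_support_tcoeff, of k "2 * int m + 1" "2 - int m"]
    by (simp add: lincomb_smul[OF finite(3)] tcoeff_support_nonneg)
  finally show ?thesis
    using qint_nonzero[of "2 * int m + 1"] by (simp add: smul_left_inject)
qed

lemma tdot_expansion:
  assumes "1 \<le> m"
  shows "tdot \<phi> (F + Ec + \<phi> k * Kinv) (2 * m - 1)
      = lincomb (pbw (2 - int m) (2 * int m - 1)) (tcoeff k (2 * int m - 1))
    \<and> tdot \<phi> (F + Ec + \<phi> k * Kinv) (2 * m) = lincomb (pbw (2 - int m) (2 * int m)) (tcoeff k (2 * int m))"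
  using assms
proof (induction m rule: nat_induct_at_least)
  case base
  then show ?case
    using tdot_expansion_1 tdot_1 tdot_expansion_even_step[of 1] by simp
next
  case (Suc m)
  then have "tdot \<phi> (F + Ec + \<phi> k * Kinv) (2 * Suc m - 1)
      = lincomb (pbw (2 - int (Suc m)) (2 * int (Suc m) - 1)) (tcoeff k (2 * int (Suc m) - 1))"
    using tdot_expansion_odd_step[of m] by (simp add: algebra_simps)
  then show ?case
    using tdot_expansion_even_step[of "Suc m"] by simp
qed

lemma smul_tcoeff_pbw:
  assumes "a \<le> b"
  shows "smul (tcoeff k n (int a, int c, int (b - a))) (pbw \<alpha> n (int a, int c, int (b - a)))
    = \<phi> (qv powi (int ((2 * c) choose 2) - (if even n then 2 * int c else 0)
          - int b * (n - int b - 2 * int c) - int a * (int b - int a))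
        * frakp_div (n - int b - 2 * int c) k)
      * dpow \<phi> Ec a * hbr \<phi> Kinv \<alpha> c * Kp (int b - n + 2 * int c) * dpow \<phi> F (b - a)"
proof -
  have "int a + int (b - a) = int b" "nat (int b - int a) = b - a"
    using assms by simp_all
  then show ?thesis
    unfolding tcoeff_exp_eq[OF assms, symmetric]
    by (simp add: tcoeff_def tcoeff_term_def pbw_def dpow_def inv_qfact_def phi_eq_smul mult.assoc
        mult_ac del: hbr.simps)
qed

end

theorem theorem5p2:
  fixes \<phi> :: "Qq \<Rightarrow> 'a::ring_1" and E F K Kinv :: 'a and l :: int and \<kappa> :: Qq and t :: 'a and m :: nat
  assumes U: "U_rep \<phi> E F K Kinv"
    and kappa: "\<kappa> = qint (2 * l - 1)"
    and t: "t = F + Echk \<phi> E Kinv + \<phi> \<kappa> * Kinv"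
    and m: "1 \<le> m"
  shows "tdot \<phi> t (2 * m) =
      (\<Sum>b\<in>{0..2*m}. \<Sum>a\<in>{0..b}. \<Sum>c\<in>{0..m}.
        \<phi> (qv powi (int ((2 * c) choose 2) - 2 * int c
               - int b * (2 * int m - int b - 2 * int c) - int a * (int b - int a))
             * frakp_div (2 * int m - int b - 2 * int c) \<kappa>)
        * dpow \<phi> (Echk \<phi> E Kinv) a * hbr \<phi> Kinv (2 - int m) c
        * Kpow K Kinv (int b - 2 * int m + 2 * int c) * dpow \<phi> F (b - a))
    \<and> tdot \<phi> t (2 * m - 1) =
      (\<Sum>b\<in>{0..2*m-1}. \<Sum>a\<in>{0..b}. \<Sum>c\<in>{0..m}.
        \<phi> (qv powi (int ((2 * c) choose 2)
               - int b * (2 * int m - int b - 2 * int c - 1) - int a * (int b - int a))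
             * frakp_div (2 * int m - int b - 2 * int c - 1) \<kappa>)
        * dpow \<phi> (Echk \<phi> E Kinv) a * hbr \<phi> Kinv (2 - int m) c
        * Kpow K Kinv (int b - 2 * int m + 2 * int c + 1) * dpow \<phi> F (b - a))"
proof -
  interpret U_algebra \<phi> E F K Kinv
    by (rule U_algebra.intro[OF U])
  have degrees: "2 * m \<le> 2 * m" "2 * m - 1 \<le> 2 * m" "int (2 * m - 1) = 2 * int m - 1"
    using m by simp_all
  have expansion: "tdot \<phi> t (2 * m) = lincomb (pbw (2 - int m) (int (2 * m))) (tcoeff \<kappa> (int (2 * m)))"
    "tdot \<phi> t (2 * m - 1) = lincomb (pbw (2 - int m) (int (2 * m - 1))) (tcoeff \<kappa> (int (2 * m - 1)))"
    using tdot_expansion[OF m, of \<kappa>] degrees(3) by (simp_all add: t)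
  show ?thesis
    unfolding expansion lincomb_tcoeff_eq_sum[OF degrees(1)] lincomb_tcoeff_eq_sum[OF degrees(2)]
    by (intro conjI sum.cong refl; subst smul_tcoeff_pbw; use m in \<open>simp add: degrees(3) algebra_simps del: hbr.simps\<close>)
qed

end
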